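(* Let $\Omega$ be a convex open subset of $\mathbb{R}^d$ (or the closure of one), $n\ge 1$, and let $C:\Omega^n\to\mathbb{R}_+\cup\{+\infty\}$. Let $S:\Omega\to\Omega$ be a $\mathcal C^1$-diffeomorphism with $|\det\nabla S(x)|=1$ for all $x\in\Omega$, and let $S_n:\Omega^n\to\Omega^n$, $S_n(x_1,\dots,x_n)=(S(x_1),\dots,S(x_n))$. Let $\mu_1,\dots,\mu_n\in\mathcal P(\Omega)$ be invariant under $S$, i.e. $S\#\mu_i=\mu_i$. Assume that $C(S_n(x))=C(x)$ for all $x\in\Omega^n$ and that the multi-marginal problem $\inf_{\gamma\in\Pi(\mu_1,\dots,\mu_n)}\int_{\Omega^n}C\,d\gamma$ has a unique solution $\gamma$. Then $\gamma$ is invariant with respect to $S_n$, i.e. $S_n\#\gamma=\gamma$.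
   Context: $\Pi(\mu_1,\dots,\mu_n)$ is the set of probability measures on $\Omega^n$ with marginals $\mu_1,\dots,\mu_n$. For a measurable map $T$, $T\#\mu$ denotes the push-forward measure, $T\#\mu(A)=\mu(T^{-1}(A))$. *)

theory Defs
  imports "HOL-Probability.Probability"
begin

definition OmegaM :: "(real^'d) set \<Rightarrow> (real^'d) measure" where
  "OmegaM \<Omega> = restrict_space borel \<Omega>"

definition OmegaNM :: "nat \<Rightarrow> (real^'d) set \<Rightarrow> (nat \<Rightarrow> real^'d) measure" where
  "OmegaNM n \<Omega> = PiM {..<n} (\<lambda>_. OmegaM \<Omega>)"

definition probs_on :: "(real^'d) set \<Rightarrow> (real^'d) measure set" where
  "probs_on \<Omega> = {\<mu>. prob_space \<mu> \<and> sets \<mu> = sets (OmegaM \<Omega>)}"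

text \<open>The set of couplings Pi(mu_1,...,mu_n) (marginals mu 0, ..., mu (n-1)).\<close>
definition couplings :: "nat \<Rightarrow> (real^'d) set \<Rightarrow> (nat \<Rightarrow> (real^'d) measure)
    \<Rightarrow> (nat \<Rightarrow> real^'d) measure set" where
  "couplings n \<Omega> \<mu> = {\<gamma>. prob_space \<gamma> \<and> sets \<gamma> = sets (OmegaNM n \<Omega>) \<and>
      (\<forall>i<n. distr \<gamma> (OmegaM \<Omega>) (\<lambda>x. x i) = \<mu> i)}"

definition prodmap :: "nat \<Rightarrow> (real^'d \<Rightarrow> real^'d) \<Rightarrow> (nat \<Rightarrow> real^'d) \<Rightarrow> (nat \<Rightarrow> real^'d)" where
  "prodmap n S x = (\<lambda>i\<in>{..<n}. S (x i))"

definition C1_diffeo_on :: "(real^'d) set \<Rightarrow> (real^'d \<Rightarrow> real^'d)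
    \<Rightarrow> (real^'d \<Rightarrow> real^'d \<Rightarrow> real^'d) \<Rightarrow> bool" where
  "C1_diffeo_on \<Omega> S S' \<longleftrightarrow>
     S ` \<Omega> = \<Omega> \<and> inj_on S \<Omega> \<and>
     (\<forall>x\<in>\<Omega>. (S has_derivative S' x) (at x within \<Omega>)) \<and>
     continuous_on \<Omega> (\<lambda>x. matrix (S' x)) \<and>
     (\<exists>T'. (\<forall>y\<in>\<Omega>. (inv_into \<Omega> S has_derivative T' y) (at y within \<Omega>)) \<and>
           continuous_on \<Omega> (\<lambda>y. matrix (T' y)))"

end

theory Submission
  imports Defs
begin

text \<open>Pushing an optimal coupling forward by \<open>S\<^sub>n\<close> keeps its marginals (they are
  \<open>S\<close>-invariant) and its cost (the cost is \<open>S\<^sub>n\<close>-invariant), so the push-forward is again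
  optimal and, by uniqueness, equal to the original coupling.\<close>

lemma C1_diffeo_on_continuous_on:
  assumes "C1_diffeo_on \<Omega> S S'"
  shows "continuous_on \<Omega> S"
  using assms unfolding C1_diffeo_on_def
  by (meson continuous_on_eq_continuous_within has_derivative_continuous)

lemma C1_diffeo_on_image: "C1_diffeo_on \<Omega> S S' \<Longrightarrow> S ` \<Omega> = \<Omega>"
  unfolding C1_diffeo_on_def by blast

lemma continuous_on_measurable_OmegaM:
  assumes "continuous_on \<Omega> S" and "S ` \<Omega> \<subseteq> \<Omega>"
  shows "S \<in> OmegaM \<Omega> \<rightarrow>\<^sub>M OmegaM \<Omega>"
  unfolding OmegaM_def
  by (rule measurable_restrict_space2)
     (use assms borel_measurable_continuous_on_restrict[OF assms(1)]
       in \<open>auto simp: space_restrict_space\<close>)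

lemma measurable_component_OmegaNM:
  "i < n \<Longrightarrow> (\<lambda>x. x i) \<in> OmegaNM n \<Omega> \<rightarrow>\<^sub>M OmegaM \<Omega>"
  unfolding OmegaNM_def by (rule measurable_component_singleton) simp

lemma measurable_prodmap:
  assumes "S \<in> OmegaM \<Omega> \<rightarrow>\<^sub>M OmegaM \<Omega>"
  shows "prodmap n S \<in> OmegaNM n \<Omega> \<rightarrow>\<^sub>M OmegaNM n \<Omega>"
  unfolding prodmap_def OmegaNM_def
  by (rule measurable_restrict, rule measurable_compose[OF _ assms])
     (rule measurable_component_singleton, simp)

lemma marginal_distr_prodmap:
  assumes S: "S \<in> OmegaM \<Omega> \<rightarrow>\<^sub>M OmegaM \<Omega>"
    and sets_\<gamma>: "sets \<gamma> = sets (OmegaNM n \<Omega>)" and i: "i < n"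
  shows "distr (distr \<gamma> (OmegaNM n \<Omega>) (prodmap n S)) (OmegaM \<Omega>) (\<lambda>x. x i)
           = distr (distr \<gamma> (OmegaM \<Omega>) (\<lambda>x. x i)) (OmegaM \<Omega>) S"
proof -
  have prodmap_\<gamma>: "prodmap n S \<in> \<gamma> \<rightarrow>\<^sub>M OmegaNM n \<Omega>"
    using measurable_prodmap[OF S] measurable_cong_sets[OF sets_\<gamma> refl] by blast
  have component_\<gamma>: "(\<lambda>x. x i) \<in> \<gamma> \<rightarrow>\<^sub>M OmegaM \<Omega>"
    using measurable_component_OmegaNM[OF i] measurable_cong_sets[OF sets_\<gamma> refl] by blast
  have "distr (distr \<gamma> (OmegaNM n \<Omega>) (prodmap n S)) (OmegaM \<Omega>) (\<lambda>x. x i)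
          = distr \<gamma> (OmegaM \<Omega>) ((\<lambda>x. x i) \<circ> prodmap n S)"
    by (rule distr_distr[OF measurable_component_OmegaNM[OF i] prodmap_\<gamma>])
  also have "\<dots> = distr \<gamma> (OmegaM \<Omega>) (S \<circ> (\<lambda>x. x i))"
    by (rule distr_cong) (auto simp: prodmap_def i)
  also have "\<dots> = distr (distr \<gamma> (OmegaM \<Omega>) (\<lambda>x. x i)) (OmegaM \<Omega>) S"
    by (rule distr_distr[symmetric, OF S component_\<gamma>])
  finally show ?thesis .
qed

lemma distr_prodmap_couplings:
  assumes \<gamma>: "\<gamma> \<in> couplings n \<Omega> \<mu>"
    and S: "S \<in> OmegaM \<Omega> \<rightarrow>\<^sub>M OmegaM \<Omega>"
    and \<mu>_invariant: "\<forall>i<n. distr (\<mu> i) (OmegaM \<Omega>) S = \<mu> i"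
  shows "distr \<gamma> (OmegaNM n \<Omega>) (prodmap n S) \<in> couplings n \<Omega> \<mu>"
proof -
  have sets_\<gamma>: "sets \<gamma> = sets (OmegaNM n \<Omega>)" and "prob_space \<gamma>"
    and marginals: "\<forall>i<n. distr \<gamma> (OmegaM \<Omega>) (\<lambda>x. x i) = \<mu> i"
    using \<gamma> unfolding couplings_def by auto
  have "prodmap n S \<in> \<gamma> \<rightarrow>\<^sub>M OmegaNM n \<Omega>"
    using measurable_prodmap[OF S] measurable_cong_sets[OF sets_\<gamma> refl] by blast
  then have "prob_space (distr \<gamma> (OmegaNM n \<Omega>) (prodmap n S))"
    using \<open>prob_space \<gamma>\<close> by (rule prob_space.prob_space_distr[rotated])
  then show ?thesis
    unfolding couplings_def
    using marginal_distr_prodmap[OF S sets_\<gamma>] marginals \<mu>_invariant by simp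
qed

lemma nn_integral_distr_prodmap_invariant:
  assumes S: "S \<in> OmegaM \<Omega> \<rightarrow>\<^sub>M OmegaM \<Omega>"
    and sets_\<gamma>: "sets \<gamma> = sets (OmegaNM n \<Omega>)"
    and C: "C \<in> borel_measurable (OmegaNM n \<Omega>)"
    and C_invariant: "\<forall>x\<in>space (OmegaNM n \<Omega>). C (prodmap n S x) = C x"
  shows "(\<integral>\<^sup>+ x. C x \<partial>distr \<gamma> (OmegaNM n \<Omega>) (prodmap n S)) = (\<integral>\<^sup>+ x. C x \<partial>\<gamma>)"
proof -
  have prodmap_\<gamma>: "prodmap n S \<in> \<gamma> \<rightarrow>\<^sub>M OmegaNM n \<Omega>"
    using measurable_prodmap[OF S] measurable_cong_sets[OF sets_\<gamma> refl] by blast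
  have "(\<integral>\<^sup>+ x. C x \<partial>distr \<gamma> (OmegaNM n \<Omega>) (prodmap n S))
               = (\<integral>\<^sup>+ x. C (prodmap n S x) \<partial>\<gamma>)"
    using nn_integral_distr[OF prodmap_\<gamma>] C by simp
  also have "\<dots> = (\<integral>\<^sup>+ x. C x \<partial>\<gamma>)"
    using C_invariant sets_eq_imp_space_eq[OF sets_\<gamma>] by (intro nn_integral_cong) auto
  finally show ?thesis .
qed

theorem mainTheorem5:
  fixes \<Omega> :: "(real^'d) set"
    and n :: nat
    and C :: "(nat \<Rightarrow> real^'d) \<Rightarrow> ennreal"
    and S :: "real^'d \<Rightarrow> real^'d"
    and \<mu> :: "nat \<Rightarrow> (real^'d) measure"
    and \<gamma> :: "(nat \<Rightarrow> real^'d) measure"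
  assumes Omega: "convex \<Omega> \<and> (open \<Omega> \<or> (\<exists>U. convex U \<and> open U \<and> \<Omega> = closure U))"
    and n: "n \<ge> 1"
    and C_meas: "C \<in> borel_measurable (OmegaNM n \<Omega>)"
    and S_diffeo: "\<exists>S'. C1_diffeo_on \<Omega> S S' \<and> (\<forall>x\<in>\<Omega>. \<bar>det (matrix (S' x))\<bar> = 1)"
    and mu: "\<forall>i<n. \<mu> i \<in> probs_on \<Omega>"
    and mu_inv: "\<forall>i<n. distr (\<mu> i) (OmegaM \<Omega>) S = \<mu> i"
    and C_inv: "\<forall>x\<in>space (OmegaNM n \<Omega>). C (prodmap n S x) = C x"
    and gamma: "\<gamma> \<in> couplings n \<Omega> \<mu>"
    and gamma_opt: "(\<integral>\<^sup>+ x. C x \<partial>\<gamma>) = (INF \<gamma>'\<in>couplings n \<Omega> \<mu>. \<integral>\<^sup>+ x. C x \<partial>\<gamma>')"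
    and unique: "\<forall>\<gamma>'\<in>couplings n \<Omega> \<mu>.
                   (\<integral>\<^sup>+ x. C x \<partial>\<gamma>') = (INF \<gamma>''\<in>couplings n \<Omega> \<mu>. \<integral>\<^sup>+ x. C x \<partial>\<gamma>'') \<longrightarrow> \<gamma>' = \<gamma>"
  shows "distr \<gamma> (OmegaNM n \<Omega>) (prodmap n S) = \<gamma>"
proof -
  obtain S' where "C1_diffeo_on \<Omega> S S'" using S_diffeo by blast
  then have S: "S \<in> OmegaM \<Omega> \<rightarrow>\<^sub>M OmegaM \<Omega>"
    by (simp add: continuous_on_measurable_OmegaM C1_diffeo_on_continuous_on C1_diffeo_on_image)
  have sets_\<gamma>: "sets \<gamma> = sets (OmegaNM n \<Omega>)"
    using gamma unfolding couplings_def by simp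
  let ?\<gamma>S = "distr \<gamma> (OmegaNM n \<Omega>) (prodmap n S)"
  have "?\<gamma>S \<in> couplings n \<Omega> \<mu>"
    using gamma S mu_inv by (rule distr_prodmap_couplings)
  moreover have "(\<integral>\<^sup>+ x. C x \<partial>?\<gamma>S) = (\<integral>\<^sup>+ x. C x \<partial>\<gamma>)"
    using S sets_\<gamma> C_meas C_inv by (rule nn_integral_distr_prodmap_invariant)
  then have "(\<integral>\<^sup>+ x. C x \<partial>?\<gamma>S) = (INF \<gamma>'\<in>couplings n \<Omega> \<mu>. \<integral>\<^sup>+ x. C x \<partial>\<gamma>')"
    using gamma_opt by (rule trans)
  ultimately show ?thesis
    by (rule unique[rule_format])
qed

end
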